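(* Let $\omega\colon\mathbf Z_+\to(0,+\infty)$ be a weight which is bounded from below and such that $\mathcal T$ is a bounded operator on $\mathcal X_\omega$. Then the adjoint $\mathcal T^*$ of $\mathcal T$ on $\mathcal X_\omega$ has no eigenvalues: $\sigma_p(\mathcal T^* )=\emptyset$. In particular this holds for $\omega=\omega_0$, $\omega_0(n)=(n+1)/\pi$.
   Context: $T\colon\mathbf Z_+\to\mathbf Z_+$ is the modified Collatz map: $T(n)=n/2$ for $n$ even, $T(n)=(3n+1)/2$ for $n$ odd. $\mathcal X_\omega$ is the Hilbert space of holomorphic functions $f(z)=\sum_{n\ge3}c_nz^n$ on the unit disk with $\|f\|_\omega^2=\sum_{n\ge3}|c_n|^2/\omega(n)<\infty$ and inner product $\langle f,g\rangle=\sum_{n\ge3}c_n(f)\overline{c_n(g)}/\omega(n)$. $\mathcal T\sum_{n\ge3}c_nz^n=\sum_{j\ge3,\,T(j)\ge3}c_jz^{T(j)}$. $\mathcal T$ is bounded on $\mathcal X_\omega$ iff the sequences $\omega(6m)/\omega(3m)$, $\omega(6m+2)/\omega(3m+1)$, $(\omega(6m+4)+\omega(2m+1))/\omega(3m+2)$ ($m\ge1$) are bounded; this holds for $\omega_0$. $\sigma_p$ denotes the point spectrum (set of eigenvalues). *)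

theory Defs
  imports "HOL-Analysis.Analysis"
begin

definition collatzT :: "nat \<Rightarrow> nat" where
  "collatzT n = (if even n then n div 2 else (3 * n + 1) div 2)"

text \<open>An element f(z) = sum_{n>=3} c_n z^n of X_omega is represented by its
  coefficient sequence c :: nat => complex (with c n = 0 for n < 3).\<close>
definition Xw :: "(nat \<Rightarrow> real) \<Rightarrow> (nat \<Rightarrow> complex) set" where
  "Xw \<omega> = {c. (\<forall>n<3. c n = 0) \<and> summable (\<lambda>n. (cmod (c n))\<^sup>2 / \<omega> n)}"

definition wnorm :: "(nat \<Rightarrow> real) \<Rightarrow> (nat \<Rightarrow> complex) \<Rightarrow> real" where
  "wnorm \<omega> c = sqrt (\<Sum>n. (cmod (c n))\<^sup>2 / \<omega> n)"

definition winner :: "(nat \<Rightarrow> real) \<Rightarrow> (nat \<Rightarrow> complex) \<Rightarrow> (nat \<Rightarrow> complex) \<Rightarrow> complex" where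
  "winner \<omega> f g = (\<Sum>n. f n * cnj (g n) / complex_of_real (\<omega> n))"

definition Top :: "(nat \<Rightarrow> complex) \<Rightarrow> (nat \<Rightarrow> complex)" where
  "Top c k = (if 3 \<le> k then (\<Sum>j\<in>{j. 3 \<le> j \<and> collatzT j = k}. c j) else 0)"

definition Top_bounded :: "(nat \<Rightarrow> real) \<Rightarrow> bool" where
  "Top_bounded \<omega> \<longleftrightarrow> (\<exists>C. \<forall>c\<in>Xw \<omega>. Top c \<in> Xw \<omega> \<and> wnorm \<omega> (Top c) \<le> C * wnorm \<omega> c)"

definition Tadj :: "(nat \<Rightarrow> real) \<Rightarrow> (nat \<Rightarrow> complex) \<Rightarrow> (nat \<Rightarrow> complex)" where
  "Tadj \<omega> g = (THE h. h \<in> Xw \<omega> \<and> (\<forall>f\<in>Xw \<omega>. winner \<omega> (Top f) g = winner \<omega> f h))"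

definition point_spectrum_Tadj :: "(nat \<Rightarrow> real) \<Rightarrow> complex set" where
  "point_spectrum_Tadj \<omega> =
     {\<mu>. \<exists>g\<in>Xw \<omega>. g \<noteq> (\<lambda>_. 0) \<and> Tadj \<omega> g = (\<lambda>n. \<mu> * g n)}"

definition omega0 :: "nat \<Rightarrow> real" where
  "omega0 n = (real n + 1) / pi"

end

(*
  The adjoint acts by (T* g)(j) = \<omega>(j) / \<omega>(T j) * g(T j), so for q = g / \<omega> an
  eigenvector equation T* g = \<mu> g becomes q \<circ> T = \<mu> q. As \<omega> is bounded below, q is
  square summable and in particular tends to 0. If |\<mu>| \<le> 1, then q(k) = \<mu>^n q(2^n k)
  along the backward orbit k, 2k, 4k, ... forces q(k) = 0; if |\<mu>| > 1, then
  q(T^n k) = \<mu>^n q(k) stays bounded only if q(k) = 0.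
  The formula for the adjoint comes from regrouping the absolutely convergent series
  for <f, T* g> along the fibres of T, each of which has at most two elements.
*)
theory Submission
  imports Defs
begin

lemma sums_fibre_sums:
  fixes a :: "nat \<Rightarrow> 'a::banach" and \<phi> :: "nat \<Rightarrow> nat"
  assumes "summable (\<lambda>j. norm (a j))" and fin: "\<And>k. finite {j. \<phi> j = k}"
  shows "(\<lambda>k. \<Sum>j\<in>{j. \<phi> j = k}. a j) sums suminf a"
proof -
  have "(a has_sum suminf a) UNIV"
    using assms(1) summable_sums[OF summable_norm_cancel[OF assms(1)]]
    by (rule norm_summable_imp_has_sum)
  moreover have "bij_betw snd (SIGMA k:UNIV. {j. \<phi> j = k}) UNIV"
    by (rule bij_betwI[where g = "\<lambda>j. (\<phi> j, j)"]) auto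
  ultimately have "((\<lambda>x. a (snd x)) has_sum suminf a) (SIGMA k:UNIV. {j. \<phi> j = k})"
    by (simp only: has_sum_reindex_bij_betw)
  moreover have "((\<lambda>j. a (snd (k, j))) has_sum (\<Sum>j\<in>{j. \<phi> j = k}. a j)) {j. \<phi> j = k}" for k
    using has_sum_finite[OF fin[of k], of a] by simp
  ultimately have "((\<lambda>k. \<Sum>j\<in>{j. \<phi> j = k}. a j) has_sum suminf a) UNIV"
    by (rule has_sum_SigmaD[where f = "\<lambda>x. a (snd x)"])
  then show ?thesis
    by (rule has_sum_imp_sums)
qed

lemma summable_comp_bounded_fibres:
  fixes b :: "nat \<Rightarrow> real" and \<phi> :: "nat \<Rightarrow> nat"
  assumes "summable b" and "\<And>n. 0 \<le> b n"
    and "\<And>k. finite {j. \<phi> j = k}" and "\<And>k. card {j. \<phi> j = k} \<le> m"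
  shows "summable (\<lambda>j. b (\<phi> j))"
proof (rule summableI_nonneg_bounded)
  fix N
  have "(\<Sum>j<N. b (\<phi> j)) = (\<Sum>k\<in>\<phi> ` {..<N}. \<Sum>j\<in>{j\<in>{..<N}. \<phi> j = k}. b (\<phi> j))"
    by (rule sum.image_gen) simp
  also have "\<dots> = (\<Sum>k\<in>\<phi> ` {..<N}. card {j\<in>{..<N}. \<phi> j = k} * b k)"
    by (intro sum.cong refl) auto
  also have "\<dots> \<le> (\<Sum>k\<in>\<phi> ` {..<N}. m * b k)"
  proof (intro sum_mono mult_right_mono)
    fix k
    have "card {j\<in>{..<N}. \<phi> j = k} \<le> card {j. \<phi> j = k}"
      by (intro card_mono assms(3)) auto
    then show "real (card {j\<in>{..<N}. \<phi> j = k}) \<le> real m"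
      using assms(4)[of k] by linarith
  qed (use assms(2) in simp)
  also have "\<dots> \<le> m * suminf b"
    unfolding sum_distrib_left[symmetric]
    by (intro mult_left_mono sum_le_suminf assms) auto
  finally show "(\<Sum>j<N. b (\<phi> j)) \<le> m * suminf b" .
qed (use assms(2) in simp)

lemma eigenvector_of_composition_vanishes:
  fixes q :: "nat \<Rightarrow> 'a::real_normed_field" and T :: "nat \<Rightarrow> nat"
  assumes T_double: "\<And>k. T (2 * k) = k" and q_lim: "q \<longlonglongrightarrow> 0"
    and eigen: "\<And>j. q (T j) = \<mu> * q j" and "0 < k"
  shows "q k = 0"
proof (cases "norm \<mu> \<le> 1")
  case True
  have backward: "q k = \<mu> ^ n * q (2 ^ n * k)" for n
  proof (induction n)
    case (Suc n)
    have "q (2 ^ n * k) = \<mu> * q (2 ^ Suc n * k)"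
      using eigen[of "2 ^ Suc n * k"] T_double[of "2 ^ n * k"] by (simp add: mult.assoc)
    with Suc show ?case by (simp add: mult.assoc)
  qed simp
  have "strict_mono (\<lambda>n. 2 ^ n * k)"
    using \<open>0 < k\<close> by (intro strict_monoI) simp
  then have "(\<lambda>n. norm (q (2 ^ n * k))) \<longlonglongrightarrow> 0"
    using tendsto_norm_zero[OF LIMSEQ_subseq_LIMSEQ[OF q_lim]] by (simp add: o_def)
  moreover have "norm (q k) \<le> norm (q (2 ^ n * k))" for n
  proof -
    have "norm (q k) = norm \<mu> ^ n * norm (q (2 ^ n * k))"
      by (subst backward[of n]) (simp add: norm_mult norm_power)
    also have "\<dots> \<le> norm (q (2 ^ n * k))"
      using True by (intro mult_left_le_one_le) (auto simp: power_le_one)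
    finally show ?thesis .
  qed
  ultimately have "norm (q k) \<le> 0"
    by (intro LIMSEQ_le_const[of "\<lambda>n. norm (q (2 ^ n * k))"]) auto
  then show ?thesis by simp
next
  case False
  have forward: "q ((T ^^ n) k) = \<mu> ^ n * q k" for n
    by (induction n) (simp_all add: eigen mult.assoc)
  obtain B where B: "\<And>n. norm (q n) \<le> B"
    using convergent_imp_Bseq[OF convergentI[OF q_lim]] by (auto simp: Bseq_def)
  show ?thesis
  proof (rule ccontr)
    assume "q k \<noteq> 0"
    obtain n where "B / norm (q k) < norm \<mu> ^ n"
      using real_arch_pow[of "norm \<mu>" "B / norm (q k)"] False by auto
    then have "B < norm \<mu> ^ n * norm (q k)"
      using \<open>q k \<noteq> 0\<close> by (simp add: pos_divide_less_eq)
    also have "\<dots> = norm (q ((T ^^ n) k))"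
      by (simp add: forward norm_mult norm_power)
    finally have "B < norm (q ((T ^^ n) k))" .
    with B[of "(T ^^ n) k"] show False by simp
  qed
qed

lemma collatzT_double [simp]: "collatzT (2 * k) = k"
  by (simp add: collatzT_def)

lemma collatzT_less_3: "j < 3 \<Longrightarrow> collatzT j < 3"
  by (auto simp: collatzT_def less_Suc_eq numeral_3_eq_3)

lemma collatzT_fibre_subset: "{j. collatzT j = k} \<subseteq> {2 * k, 2 * (k div 3) + 1}"
proof
  fix j assume "j \<in> {j. collatzT j = k}"
  then show "j \<in> {2 * k, 2 * (k div 3) + 1}"
    by (cases "even j") (auto simp: collatzT_def elim!: oddE)
qed

lemma finite_collatzT_fibre: "finite {j. collatzT j = k}"
  using collatzT_fibre_subset by (rule finite_subset) simp

lemma card_collatzT_fibre: "card {j. collatzT j = k} \<le> 2"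
proof -
  have "card {j. collatzT j = k} \<le> card {2 * k, 2 * (k div 3) + 1}"
    by (intro card_mono collatzT_fibre_subset) simp
  also have "\<dots> \<le> 2"
    by (simp add: card_insert_if)
  finally show ?thesis .
qed

lemma le_double_collatzT: "j \<le> 2 * collatzT j + 1"
  by (auto simp: collatzT_def)

definition unit_seq :: "nat \<Rightarrow> nat \<Rightarrow> complex" where
  "unit_seq i n = (if n = i then 1 else 0)"

lemma Xw_vanishes_below_3: "c \<in> Xw \<omega> \<Longrightarrow> n < 3 \<Longrightarrow> c n = 0"
  by (simp add: Xw_def)

lemma Xw_summable: "c \<in> Xw \<omega> \<Longrightarrow> summable (\<lambda>n. (cmod (c n))\<^sup>2 / \<omega> n)"
  by (simp add: Xw_def)

lemma unit_seq_weighted_sq: "(\<lambda>n. (cmod (unit_seq i n))\<^sup>2 / \<omega> n) = (\<lambda>n. if n = i then 1 / \<omega> i else 0)"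
  by (auto simp: unit_seq_def fun_eq_iff)

lemma unit_seq_in_Xw: "3 \<le> i \<Longrightarrow> unit_seq i \<in> Xw \<omega>"
  by (auto simp: Xw_def unit_seq_weighted_sq) (simp add: unit_seq_def)

lemma wnorm_unit_seq: "wnorm \<omega> (unit_seq i) = sqrt (1 / \<omega> i)"
  unfolding wnorm_def unit_seq_weighted_sq
  using sums_single[of i "\<lambda>_. 1 / \<omega> i"] by (simp add: sums_iff)

lemma winner_unit_seq: "winner \<omega> (unit_seq i) h = cnj (h i) / complex_of_real (\<omega> i)"
proof -
  have "(\<lambda>n. unit_seq i n * cnj (h n) / complex_of_real (\<omega> n))
      = (\<lambda>n. if n = i then cnj (h i) / complex_of_real (\<omega> i) else 0)"
    by (auto simp: unit_seq_def fun_eq_iff)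
  then show ?thesis
    using sums_single[of i "\<lambda>_. cnj (h i) / complex_of_real (\<omega> i)"]
    by (simp add: winner_def sums_iff)
qed

lemma Top_unit_seq:
  assumes "3 \<le> j" "3 \<le> collatzT j"
  shows "Top (unit_seq j) = unit_seq (collatzT j)"
proof
  fix k
  have "finite {i. 3 \<le> i \<and> collatzT i = k}"
    by (rule finite_subset[OF _ finite_collatzT_fibre[of k]]) auto
  then show "Top (unit_seq j) k = unit_seq (collatzT j) k"
    using assms by (auto simp: Top_def unit_seq_def)
qed

definition Top_adjoint :: "(nat \<Rightarrow> real) \<Rightarrow> (nat \<Rightarrow> complex) \<Rightarrow> nat \<Rightarrow> complex" where
  "Top_adjoint \<omega> g j = (if 3 \<le> j \<and> 3 \<le> collatzT j
     then complex_of_real (\<omega> j / \<omega> (collatzT j)) * g (collatzT j) else 0)"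

text \<open>The boundedness criterion for \<open>T\<close> in the paper: the ratios \<open>\<omega>(6m)/\<omega>(3m)\<close>,
  \<open>\<omega>(6m+2)/\<omega>(3m+1)\<close>, \<open>\<omega>(6m+4)/\<omega>(3m+2)\<close> and \<open>\<omega>(2m+1)/\<omega>(3m+2)\<close> are exactly
  the ratios \<open>\<omega> j / \<omega> (T j)\<close>.\<close>
definition collatz_ratio_bounded :: "(nat \<Rightarrow> real) \<Rightarrow> bool" where
  "collatz_ratio_bounded \<omega> \<longleftrightarrow> (\<exists>K. \<forall>j. 3 \<le> j \<longrightarrow> 3 \<le> collatzT j \<longrightarrow> \<omega> j \<le> K * \<omega> (collatzT j))"

lemma Top_adjoint_vanishes_below_3: "j < 3 \<Longrightarrow> Top_adjoint \<omega> g j = 0"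
  by (simp add: Top_adjoint_def)

lemma omega0_ratio_bounded: "collatz_ratio_bounded omega0"
  unfolding collatz_ratio_bounded_def
proof (intro exI allI impI)
  fix j
  have "real j \<le> 2 * real (collatzT j) + 1"
    using le_double_collatzT[of j] by linarith
  then show "omega0 j \<le> 3 * omega0 (collatzT j)"
    by (simp add: omega0_def divide_right_mono)
qed

context
  fixes \<omega> :: "nat \<Rightarrow> real"
  assumes weight_pos: "\<And>n. 1 \<le> n \<Longrightarrow> 0 < \<omega> n"
begin

lemma Xw_weighted_sq_nonneg: "c \<in> Xw \<omega> \<Longrightarrow> 0 \<le> (cmod (c n))\<^sup>2 / \<omega> n"
  using weight_pos[of n] Xw_vanishes_below_3[of c \<omega> n] by (cases "n = 0") auto

lemma summable_norm_winner:
  assumes f: "f \<in> Xw \<omega>" and h: "h \<in> Xw \<omega>"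
  shows "summable (\<lambda>n. norm (f n * cnj (h n) / complex_of_real (\<omega> n)))"
proof (rule summable_comparison_test')
  show "summable (\<lambda>n. ((cmod (f n))\<^sup>2 / \<omega> n + (cmod (h n))\<^sup>2 / \<omega> n) / 2)"
    using Xw_summable[OF f] Xw_summable[OF h] by (intro summable_divide summable_add)
next
  fix n :: nat
  show "norm (norm (f n * cnj (h n) / complex_of_real (\<omega> n)))
      \<le> ((cmod (f n))\<^sup>2 / \<omega> n + (cmod (h n))\<^sup>2 / \<omega> n) / 2"
  proof (cases "n = 0")
    case True
    then show ?thesis using Xw_vanishes_below_3[OF f, of n] Xw_vanishes_below_3[OF h, of n] by simp
  next
    case False
    then have "0 < \<omega> n" using weight_pos by simp
    moreover have "2 * (cmod (f n) * cmod (h n)) \<le> (cmod (f n))\<^sup>2 + (cmod (h n))\<^sup>2"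
      using sum_squares_bound[of "cmod (f n)" "cmod (h n)"] by (simp add: mult.assoc)
    ultimately show ?thesis
      by (simp add: norm_mult norm_divide field_simps)
  qed
qed

lemma Xw_quotient_tendsto_zero:
  assumes "0 < \<delta>" and lower: "\<And>n. 1 \<le> n \<Longrightarrow> \<delta> \<le> \<omega> n" and g: "g \<in> Xw \<omega>"
  shows "(\<lambda>n. g n / complex_of_real (\<omega> n)) \<longlonglongrightarrow> 0"
proof (rule Lim_null_comparison)
  have "(\<lambda>n. (cmod (g n))\<^sup>2 / \<omega> n) \<longlonglongrightarrow> 0"
    using Xw_summable[OF g] by (rule summable_LIMSEQ_zero)
  then show "(\<lambda>n. sqrt ((cmod (g n))\<^sup>2 / \<omega> n / \<delta>)) \<longlonglongrightarrow> 0"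
    using tendsto_real_sqrt[OF tendsto_divide_zero] by fastforce
  show "\<forall>\<^sub>F n in sequentially. norm (g n / complex_of_real (\<omega> n)) \<le> sqrt ((cmod (g n))\<^sup>2 / \<omega> n / \<delta>)"
  proof (intro always_eventually allI real_le_rsqrt)
    fix n :: nat
    show "(norm (g n / complex_of_real (\<omega> n)))\<^sup>2 \<le> (cmod (g n))\<^sup>2 / \<omega> n / \<delta>"
    proof (cases "n = 0")
      case True
      then show ?thesis using Xw_vanishes_below_3[OF g, of n] by simp
    next
      case False
      then have "0 < \<delta>" "\<delta> \<le> \<omega> n" using assms by auto
      then have "(cmod (g n))\<^sup>2 / \<omega> n / \<omega> n \<le> (cmod (g n))\<^sup>2 / \<omega> n / \<delta>"
        by (intro divide_left_mono mult_pos_pos) auto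
      then show ?thesis
        by (simp add: norm_divide power_divide power2_eq_square)
    qed
  qed
qed

lemma Top_bounded_imp_ratio_bounded:
  assumes "Top_bounded \<omega>"
  shows "collatz_ratio_bounded \<omega>"
proof -
  obtain C where C: "\<And>c. c \<in> Xw \<omega> \<Longrightarrow> wnorm \<omega> (Top c) \<le> C * wnorm \<omega> c"
    using assms unfolding Top_bounded_def by blast
  have "\<omega> j \<le> C\<^sup>2 * \<omega> (collatzT j)" if j: "3 \<le> j" "3 \<le> collatzT j" for j
  proof -
    have w: "0 < \<omega> j" "0 < \<omega> (collatzT j)"
      using weight_pos j by auto
    have "sqrt (1 / \<omega> (collatzT j)) \<le> C * sqrt (1 / \<omega> j)"
      using C[OF unit_seq_in_Xw[OF j(1)]] by (simp add: Top_unit_seq[OF j] wnorm_unit_seq)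
    then have "(sqrt (1 / \<omega> (collatzT j)))\<^sup>2 \<le> (C * sqrt (1 / \<omega> j))\<^sup>2"
      by (rule power_mono) (use w in simp)
    then have "1 / \<omega> (collatzT j) \<le> C\<^sup>2 / \<omega> j"
      using w by (simp add: power_mult_distrib)
    then have "1 / \<omega> (collatzT j) * (\<omega> j * \<omega> (collatzT j)) \<le> C\<^sup>2 / \<omega> j * (\<omega> j * \<omega> (collatzT j))"
      by (rule mult_right_mono) (use w in simp)
    then show ?thesis
      using w by simp
  qed
  then show ?thesis
    unfolding collatz_ratio_bounded_def by blast
qed

lemma Top_adjoint_in_Xw:
  assumes ratio: "collatz_ratio_bounded \<omega>" and g: "g \<in> Xw \<omega>"
  shows "Top_adjoint \<omega> g \<in> Xw \<omega>"
proof -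
  obtain K where K: "\<And>j. 3 \<le> j \<Longrightarrow> 3 \<le> collatzT j \<Longrightarrow> \<omega> j \<le> K * \<omega> (collatzT j)"
    using ratio unfolding collatz_ratio_bounded_def by blast
  let ?b = "\<lambda>n. (cmod (g n))\<^sup>2 / \<omega> n"
  have bound: "norm ((cmod (Top_adjoint \<omega> g j))\<^sup>2 / \<omega> j) \<le> \<bar>K\<bar> * ?b (collatzT j)" for j
  proof (cases "3 \<le> j \<and> 3 \<le> collatzT j")
    case True
    let ?t = "collatzT j"
    have w: "0 < \<omega> j" "0 < \<omega> ?t"
      using weight_pos True by auto
    have "cmod (Top_adjoint \<omega> g j) = \<omega> j / \<omega> ?t * cmod (g ?t)"
      using True w by (simp add: Top_adjoint_def norm_mult norm_divide)
    then have "norm ((cmod (Top_adjoint \<omega> g j))\<^sup>2 / \<omega> j) = \<omega> j / \<omega> ?t * ?b ?t"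
      using w by (simp add: power2_eq_square)
    also have "\<dots> \<le> \<bar>K\<bar> * ?b ?t"
    proof (intro mult_right_mono Xw_weighted_sq_nonneg[OF g])
      have "K * \<omega> ?t \<le> \<bar>K\<bar> * \<omega> ?t"
        using w(2) by (intro mult_right_mono) auto
      then have "\<omega> j \<le> \<bar>K\<bar> * \<omega> ?t"
        using K[of j] True by linarith
      then show "\<omega> j / \<omega> ?t \<le> \<bar>K\<bar>"
        using w(2) by (simp add: pos_divide_le_eq)
    qed
    finally show ?thesis .
  next
    case False
    then have "Top_adjoint \<omega> g j = 0"
      by (auto simp: Top_adjoint_def)
    moreover have "0 \<le> \<bar>K\<bar> * ?b (collatzT j)"
      using Xw_weighted_sq_nonneg[OF g] by (intro mult_nonneg_nonneg) auto
    ultimately show ?thesis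
      by simp
  qed
  have "summable (\<lambda>j. ?b (collatzT j))"
    using Xw_summable[OF g] Xw_weighted_sq_nonneg[OF g] finite_collatzT_fibre card_collatzT_fibre
    by (rule summable_comp_bounded_fibres)
  then have "summable (\<lambda>j. \<bar>K\<bar> * ?b (collatzT j))"
    by (rule summable_mult)
  then have "summable (\<lambda>j. (cmod (Top_adjoint \<omega> g j))\<^sup>2 / \<omega> j)"
    by (rule summable_comparison_test'[OF _ bound])
  then show ?thesis
    by (simp add: Xw_def Top_adjoint_vanishes_below_3)
qed

text \<open>Both inner products are sums of the same absolutely summable family
  \<open>f j \<cdot> cnj (g (T j)) / \<omega> (T j)\<close>, grouped along the fibres of \<open>T\<close> on the left.\<close>
lemma winner_Top_eq:
  assumes ratio: "collatz_ratio_bounded \<omega>" and f: "f \<in> Xw \<omega>" and g: "g \<in> Xw \<omega>"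
  shows "winner \<omega> (Top f) g = winner \<omega> f (Top_adjoint \<omega> g)"
proof -
  define a where "a j = f j * cnj (Top_adjoint \<omega> g j) / complex_of_real (\<omega> j)" for j
  have "summable (\<lambda>j. norm (a j))"
    unfolding a_def by (rule summable_norm_winner[OF f Top_adjoint_in_Xw[OF ratio g]])
  then have "(\<lambda>k. \<Sum>j\<in>{j. collatzT j = k}. a j) sums winner \<omega> f (Top_adjoint \<omega> g)"
    unfolding winner_def a_def[symmetric] using finite_collatzT_fibre by (rule sums_fibre_sums)
  moreover have "(\<Sum>j\<in>{j. collatzT j = k}. a j) = Top f k * cnj (g k) / complex_of_real (\<omega> k)" for k
  proof (cases "3 \<le> k")
    case True
    have "a j = (if 3 \<le> j then f j * cnj (g k) / complex_of_real (\<omega> k) else 0)"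
      if "collatzT j = k" for j
      using that True weight_pos[of j] Xw_vanishes_below_3[OF f, of j]
      by (auto simp: a_def Top_adjoint_def)
    then have "(\<Sum>j\<in>{j. collatzT j = k}. a j)
        = (\<Sum>j\<in>{j. collatzT j = k}. if 3 \<le> j then f j * cnj (g k) / complex_of_real (\<omega> k) else 0)"
      by (intro sum.cong) auto
    also have "\<dots> = (\<Sum>j\<in>{j. 3 \<le> j \<and> collatzT j = k}. f j * cnj (g k) / complex_of_real (\<omega> k))"
      by (rule sum.mono_neutral_cong_right[OF finite_collatzT_fibre]) auto
    also have "\<dots> = (\<Sum>j\<in>{j. 3 \<le> j \<and> collatzT j = k}. f j) * cnj (g k) / complex_of_real (\<omega> k)"
      by (simp add: sum_distrib_right sum_divide_distrib)
    finally show ?thesis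
      using True by (simp add: Top_def)
  next
    case False
    have "a j = 0" if "collatzT j = k" for j
      using that False Xw_vanishes_below_3[OF f, of j] by (auto simp: a_def Top_adjoint_def)
    then show ?thesis
      using False by (simp add: Top_def)
  qed
  ultimately show ?thesis
    by (simp add: winner_def sums_iff)
qed

lemma Tadj_eq_Top_adjoint:
  assumes ratio: "collatz_ratio_bounded \<omega>" and g: "g \<in> Xw \<omega>"
  shows "Tadj \<omega> g = Top_adjoint \<omega> g"
  unfolding Tadj_def
proof (rule the_equality)
  show "Top_adjoint \<omega> g \<in> Xw \<omega> \<and> (\<forall>f\<in>Xw \<omega>. winner \<omega> (Top f) g = winner \<omega> f (Top_adjoint \<omega> g))"
    using Top_adjoint_in_Xw[OF ratio g] winner_Top_eq[OF ratio _ g] by blast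
next
  fix h
  assume h: "h \<in> Xw \<omega> \<and> (\<forall>f\<in>Xw \<omega>. winner \<omega> (Top f) g = winner \<omega> f h)"
  show "h = Top_adjoint \<omega> g"
  proof
    fix n
    show "h n = Top_adjoint \<omega> g n"
    proof (cases "n < 3")
      case True
      then show ?thesis
        using h Xw_vanishes_below_3[of h \<omega> n] by (simp add: Top_adjoint_vanishes_below_3)
    next
      case False
      then have unit: "unit_seq n \<in> Xw \<omega>"
        by (simp add: unit_seq_in_Xw)
      then have "winner \<omega> (unit_seq n) h = winner \<omega> (unit_seq n) (Top_adjoint \<omega> g)"
        using h winner_Top_eq[OF ratio unit g] by simp
      then show ?thesis
        using weight_pos[of n] False by (simp add: winner_unit_seq)
    qed
  qed
qed

lemma point_spectrum_Tadj_empty: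
  assumes "0 < \<delta>" and lower: "\<And>n. 1 \<le> n \<Longrightarrow> \<delta> \<le> \<omega> n" and ratio: "collatz_ratio_bounded \<omega>"
  shows "point_spectrum_Tadj \<omega> = {}"
proof -
  have "g = (\<lambda>_. 0)" if g: "g \<in> Xw \<omega>" and eigen: "Tadj \<omega> g = (\<lambda>n. \<mu> * g n)" for g \<mu>
  proof
    define q where "q n = g n / complex_of_real (\<omega> n)" for n
    have adjoint: "Top_adjoint \<omega> g j = \<mu> * g j" for j
      using eigen Tadj_eq_Top_adjoint[OF ratio g] by (simp add: fun_eq_iff)
    have q_eigen: "q (collatzT j) = \<mu> * q j" for j
    proof (cases "3 \<le> j \<and> 3 \<le> collatzT j")
      case True
      then have "0 < \<omega> j" "0 < \<omega> (collatzT j)"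
        using weight_pos by auto
      then show ?thesis
        using adjoint[of j] True by (simp add: q_def Top_adjoint_def field_simps)
    next
      case False
      then have "g (collatzT j) = 0" "\<mu> * g j = 0"
        using adjoint[of j] Xw_vanishes_below_3[OF g] collatzT_less_3[of j]
        by (auto simp: Top_adjoint_def not_le)
      then show ?thesis
        by (simp add: q_def)
    qed
    have q_lim: "q \<longlonglongrightarrow> 0"
      unfolding q_def using \<open>0 < \<delta>\<close> lower g by (rule Xw_quotient_tendsto_zero)
    have q0: "q n = 0" if "0 < n" for n
      using collatzT_double q_lim q_eigen that by (rule eigenvector_of_composition_vanishes)
    fix n
    show "g n = 0"
      using q0[of n] weight_pos[of n] Xw_vanishes_below_3[OF g, of n] by (cases "n = 0") (auto simp: q_def)
  qed
  then show ?thesis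
    unfolding point_spectrum_Tadj_def by blast
qed

end

theorem theorem2p7:
  shows "(\<forall>\<omega> :: nat \<Rightarrow> real.
            (\<forall>n\<ge>1. \<omega> n > 0) \<and> (\<exists>\<delta>>0. \<forall>n\<ge>1. \<omega> n \<ge> \<delta>) \<and> Top_bounded \<omega>
            \<longrightarrow> point_spectrum_Tadj \<omega> = {})
         \<and> point_spectrum_Tadj omega0 = {}"
proof (intro conjI allI impI)
  fix \<omega> :: "nat \<Rightarrow> real"
  assume "(\<forall>n\<ge>1. \<omega> n > 0) \<and> (\<exists>\<delta>>0. \<forall>n\<ge>1. \<omega> n \<ge> \<delta>) \<and> Top_bounded \<omega>"
  then obtain \<delta> where pos: "\<And>n. 1 \<le> n \<Longrightarrow> 0 < \<omega> n" and "0 < \<delta>"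
    and lower: "\<And>n. 1 \<le> n \<Longrightarrow> \<delta> \<le> \<omega> n" and bounded: "Top_bounded \<omega>"
    by blast
  show "point_spectrum_Tadj \<omega> = {}"
    using pos \<open>0 < \<delta>\<close> lower Top_bounded_imp_ratio_bounded[OF pos bounded]
    by (rule point_spectrum_Tadj_empty)
next
  have "\<And>n. 1 \<le> n \<Longrightarrow> 0 < omega0 n" "\<And>n. 1 \<le> n \<Longrightarrow> 1 / pi \<le> omega0 n"
    by (auto simp: omega0_def divide_right_mono)
  then show "point_spectrum_Tadj omega0 = {}"
    using omega0_ratio_bounded by (intro point_spectrum_Tadj_empty[of omega0 "1 / pi"]) auto
qed

end
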